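(* Let $X_1,\dots,X_n$ be mutually independent random variables with product distribution $\mu$ and let $A_1,\dots,A_m$ be events, $A_i$ determined by the variables indexed by $\mathrm{vbl}(A_i)\subseteq[n]$. Let $G$ be the dependency graph on $[m]$ (distinct $i,j$ adjacent iff $\mathrm{vbl}(A_i)\cap\mathrm{vbl}(A_j)\neq\emptyset$), $\Gamma^+(S)$ the union of $S\subseteq[m]$ with its neighbours, and $\mathcal{I}$ the collection of independent sets of $G$. Assume $\Pr_\mu(A_i\wedge A_j)=0$ whenever $i,j$ are adjacent. Let $p_i=\Pr_\mu(A_i)$, and for $I\in\mathcal I$ let $$q_I=\sum_{J\in\mathcal{I},\,I\subseteq J}(-1)^{|J|-|I|}\prod_{i\in J}p_i .$$ For an independent set sequence $\mathcal S=(S_1,\dots,S_\ell)$ let $p_{\mathcal S}=\prod_{t=1}^{\ell}\prod_{i\in S_t}p_i$. Run the algorithm: draw all variables independently; in round $t=1,2,\dots$, let $I_t$ be the set of indices of events occurring under the current assignment; if $I_t=\emptyset$ stop, otherwise independently resample all variables in $\bigcup_{i\in I_t}\mathrm{vbl}(A_i)$. Let $I\in\mathcal I$ and let $\mathcal S=(S_1,\dots,S_\ell)$, $\ell\ge1$, be an independent set sequence with $I\subseteq\Gamma^+(S_\ell)$. Then $$\Pr\big(I_t=S_t\text{ for all }1\le t\le \ell\text{ and } I_{\ell+1}=I\big)=q_I\,p_{\mathcal S}.$$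
   Context: An independent set sequence is a sequence $S_1,\dots,S_\ell$ of nonempty independent sets of $G$ with $S_{t+1}\subseteq\Gamma^+(S_t)$ for all $1\le t\le\ell-1$. *)

theory Defs
  imports "HOL-Probability.Probability"
begin

text \<open>Variables are indexed by {..<n}, events by {..<m}. An assignment is an
element of the product space PiM {..<n} M. vbl i is the set of variables event i
depends on.\<close>

definition adj :: "(nat \<Rightarrow> nat set) \<Rightarrow> nat \<Rightarrow> nat \<Rightarrow> bool" where
  "adj vbl i j \<longleftrightarrow> i \<noteq> j \<and> vbl i \<inter> vbl j \<noteq> {}"

definition indep_set :: "nat \<Rightarrow> (nat \<Rightarrow> nat set) \<Rightarrow> nat set \<Rightarrow> bool" where
  "indep_set m vbl J \<longleftrightarrow> J \<subseteq> {..<m} \<and> (\<forall>i\<in>J. \<forall>j\<in>J. \<not> adj vbl i j)"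

definition Gamma_plus :: "nat \<Rightarrow> (nat \<Rightarrow> nat set) \<Rightarrow> nat set \<Rightarrow> nat set" where
  "Gamma_plus m vbl S = S \<union> {j. j < m \<and> (\<exists>i\<in>S. adj vbl i j)}"

fun indep_set_seq :: "nat \<Rightarrow> (nat \<Rightarrow> nat set) \<Rightarrow> nat set list \<Rightarrow> bool" where
  "indep_set_seq m vbl [] = True"
| "indep_set_seq m vbl [S] = (S \<noteq> {} \<and> indep_set m vbl S)"
| "indep_set_seq m vbl (S # T # Ss) =
     (S \<noteq> {} \<and> indep_set m vbl S \<and> T \<subseteq> Gamma_plus m vbl S \<and> indep_set_seq m vbl (T # Ss))"

definition q_coef :: "nat \<Rightarrow> (nat \<Rightarrow> nat set) \<Rightarrow> (nat \<Rightarrow> real) \<Rightarrow> nat set \<Rightarrow> real" where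
  "q_coef m vbl p I =
     (\<Sum>J\<in>{J. indep_set m vbl J \<and> I \<subseteq> J}. (-1) ^ (card J - card I) * (\<Prod>i\<in>J. p i))"

definition p_seq :: "(nat \<Rightarrow> real) \<Rightarrow> nat set list \<Rightarrow> real" where
  "p_seq p Ss = (\<Prod>S\<leftarrow>Ss. \<Prod>i\<in>S. p i)"

definition occurring :: "nat \<Rightarrow> (nat \<Rightarrow> ('b set)) \<Rightarrow> 'b \<Rightarrow> nat set" where
  "occurring m A \<sigma> = {i. i < m \<and> \<sigma> \<in> A i}"

definition resample :: "(nat \<Rightarrow> 'a) \<Rightarrow> nat set \<Rightarrow> (nat \<Rightarrow> 'a) \<Rightarrow> (nat \<Rightarrow> 'a)" where
  "resample \<sigma> T \<tau> = (\<lambda>k. if k \<in> T then \<tau> k else \<sigma> k)"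

text \<open>In each round where the occurring set is S,
all variables in the union of vbl i over i in S are resampled independently from
mu (only those coordinates of the fresh sample are used).\<close>
primrec traj :: "(nat \<Rightarrow> 'a) measure \<Rightarrow> nat \<Rightarrow> (nat \<Rightarrow> (nat \<Rightarrow> 'a) set) \<Rightarrow> (nat \<Rightarrow> nat set)
                 \<Rightarrow> (nat \<Rightarrow> 'a) \<Rightarrow> nat set list \<Rightarrow> nat set \<Rightarrow> ennreal" where
  "traj \<mu> m A vbl \<sigma> [] I = (if occurring m A \<sigma> = I then 1 else 0)"
| "traj \<mu> m A vbl \<sigma> (S # Ss) I =
     (if occurring m A \<sigma> = S
      then \<integral>\<^sup>+ \<tau>. traj \<mu> m A vbl (resample \<sigma> (\<Union>i\<in>S. vbl i) \<tau>) Ss I \<partial>\<mu>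
      else 0)"

definition run_prob :: "(nat \<Rightarrow> 'a) measure \<Rightarrow> nat \<Rightarrow> (nat \<Rightarrow> (nat \<Rightarrow> 'a) set) \<Rightarrow> (nat \<Rightarrow> nat set)
                 \<Rightarrow> nat set list \<Rightarrow> nat set \<Rightarrow> real" where
  "run_prob \<mu> m A vbl Ss I = enn2real (\<integral>\<^sup>+ \<sigma>. traj \<mu> m A vbl \<sigma> Ss I \<partial>\<mu>)"

end

theory Submission
  imports Defs
begin

text \<open>The run is peeled off one round at a time. Given that no event outside T occurs, the
round observes exactly S iff all events of S occur and none outside \<open>\<Gamma>\<^sup>+(S)\<close> does, up to a
null set: almost surely the occurring events form an independent set, because adjacent events
are disjoint. The first condition depends only on the variables V of S; the second, and the
rest of the run after V is resampled, only on the remaining variables. So they are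
independent, and since resampling V preserves the product measure, each round contributes
\<open>Pr(all of S occur) = \<Prod>\<^sub>i\<^sub>\<in>\<^sub>S p\<^sub>i\<close>. What is left is \<open>Pr(I\<^sub>1 = I)\<close>, which is \<open>q\<^sub>I\<close> by
inclusion-exclusion, since all events of J occur with probability \<open>\<Prod>\<^sub>i\<^sub>\<in>\<^sub>J p\<^sub>i\<close> if J is
independent and 0 otherwise.\<close>

lemma (in finite_measure) measure_Diff_UN_inclusion_exclusion:
  assumes R: "finite R" and B: "B \<in> sets M" and X: "\<And>j. j \<in> R \<Longrightarrow> X j \<in> sets M"
  shows "measure M (B - (\<Union>j\<in>R. X j)) = (\<Sum>J\<in>Pow R. (-1) ^ card J * measure M (B \<inter> (\<Inter>j\<in>J. X j)))"
proof -
  interpret Incl_Excl "\<lambda>S. S \<in> sets M" "\<lambda>S. measure M (B \<inter> S)"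
    by unfold_locales (auto simp: disjnt_def Int_Un_distrib B intro!: finite_measure_Union)
  have "measure M (B \<inter> (\<Union>j\<in>R. X j))
      = (\<Sum>J | J \<subseteq> R \<and> J \<noteq> {}. (-1) ^ (card J + 1) * measure M (B \<inter> (\<Inter>j\<in>J. X j)))"
    using restricted_indexed[OF R] X by simp
  moreover have "measure M (B - (\<Union>j\<in>R. X j)) = measure M B - measure M (B \<inter> (\<Union>j\<in>R. X j))"
    using R B X by (intro finite_measure_Diff') auto
  moreover have "Pow R = insert {} {J. J \<subseteq> R \<and> J \<noteq> {}}" by auto
  ultimately show ?thesis
    using R by (simp add: sum_negf)
qed

text \<open>The product locales demand a probability space at every index, not only at those in K;
the other factors are padded with a point mass, which leaves \<open>PiM K\<close> unchanged.\<close>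

lemma finite_product_prob_space_extend:
  assumes "finite K" and "\<And>k. k \<in> K \<Longrightarrow> prob_space (M k)"
  shows "finite_product_prob_space (\<lambda>k. if k \<in> K then M k else return (count_space UNIV) undefined) K"
proof -
  have "prob_space (if k \<in> K then M k else return (count_space UNIV) undefined)" for k
    using assms(2) by (simp add: prob_space_return)
  then show ?thesis
    using assms(1) by (simp add: finite_product_prob_space_def product_prob_space_def
        finite_product_sigma_finite_def finite_product_sigma_finite_axioms_def product_sigma_finite_def
        product_prob_space_axioms_def prob_space_imp_sigma_finite)
qed

lemma indep_set_subset: "indep_set m vbl J \<Longrightarrow> J' \<subseteq> J \<Longrightarrow> indep_set m vbl J'"
  by (auto simp: indep_set_def)

lemma indep_set_eq_if_subset_Gamma_plus:
  "indep_set m vbl J \<Longrightarrow> S \<subseteq> J \<Longrightarrow> J \<subseteq> Gamma_plus m vbl S \<Longrightarrow> J = S"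
  unfolding indep_set_def Gamma_plus_def by blast

lemma vbl_outside_Gamma_plus:
  "(\<Union>j\<in>{..<m} - Gamma_plus m vbl S. vbl j) \<subseteq> - (\<Union>i\<in>S. vbl i)"
  by (auto simp: Gamma_plus_def adj_def) (metis IntI empty_iff)

lemma indep_set_seq_ConsD:
  "indep_set_seq m vbl (S # Ss) \<Longrightarrow>
    indep_set m vbl S \<and> indep_set_seq m vbl Ss \<and> (Ss \<noteq> [] \<longrightarrow> hd Ss \<subseteq> Gamma_plus m vbl S)"
  by (cases Ss) auto

lemma p_seq_nonneg: "(\<And>i. p i \<ge> 0) \<Longrightarrow> p_seq p Ss \<ge> 0"
  unfolding p_seq_def by (induction Ss) (auto intro!: prod_nonneg mult_nonneg_nonneg)

locale resampling_space = finite_product_prob_space M K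
  for M :: "nat \<Rightarrow> 'a measure" and K :: "nat set"
begin

abbreviation \<mu> :: "(nat \<Rightarrow> 'a) measure" where "\<mu> \<equiv> PiM K M"

definition determined_by :: "nat set \<Rightarrow> ((nat \<Rightarrow> 'a) \<Rightarrow> 'b) \<Rightarrow> bool" where
  "determined_by V f \<longleftrightarrow> (\<forall>\<sigma>\<in>space \<mu>. \<forall>\<tau>\<in>space \<mu>. (\<forall>k\<in>V. \<sigma> k = \<tau> k) \<longrightarrow> f \<sigma> = f \<tau>)"

lemma determined_byD:
  "determined_by V f \<Longrightarrow> \<sigma> \<in> space \<mu> \<Longrightarrow> \<tau> \<in> space \<mu> \<Longrightarrow> (\<And>k. k \<in> V \<Longrightarrow> \<sigma> k = \<tau> k) \<Longrightarrow> f \<sigma> = f \<tau>"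
  unfolding determined_by_def by blast

lemma determined_by_mult:
  "determined_by V f \<Longrightarrow> determined_by V g \<Longrightarrow> determined_by V (\<lambda>\<sigma>. f \<sigma> * g \<sigma>)"
  unfolding determined_by_def by metis

lemma measurable_resample [measurable]:
  "(\<lambda>x. resample (fst x) V (snd x)) \<in> \<mu> \<Otimes>\<^sub>M \<mu> \<rightarrow>\<^sub>M \<mu>"
proof -
  have "(\<lambda>x. \<lambda>k. if k \<in> V then snd x k else fst x k) \<in> \<mu> \<Otimes>\<^sub>M \<mu> \<rightarrow>\<^sub>M \<mu>"
    by (rule measurable_PiM_single') (auto simp: space_pair_measure space_PiM PiE_iff extensional_def)
  then show ?thesis
    by (simp add: resample_def)
qed

lemma resample_in_space: "\<sigma> \<in> space \<mu> \<Longrightarrow> \<tau> \<in> space \<mu> \<Longrightarrow> resample \<sigma> V \<tau> \<in> space \<mu>"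
  by (auto simp: resample_def space_PiM PiE_iff extensional_def)

lemma distr_resample: "distr (\<mu> \<Otimes>\<^sub>M \<mu>) \<mu> (\<lambda>x. resample (fst x) V (snd x)) = \<mu>"
proof (rule PiM_eqI)
  show "finite K" by (rule finite_index)
  show "sets (distr (\<mu> \<Otimes>\<^sub>M \<mu>) \<mu> (\<lambda>x. resample (fst x) V (snd x))) = sets \<mu>" by simp
  fix B assume B: "\<And>i. i \<in> K \<Longrightarrow> B i \<in> sets (M i)"
  define B1 where "B1 k = (if k \<in> V then space (M k) else B k)" for k
  define B2 where "B2 k = (if k \<in> V then B k else space (M k))" for k
  have "(\<lambda>x. resample (fst x) V (snd x)) -` Pi\<^sub>E K B \<inter> space (\<mu> \<Otimes>\<^sub>M \<mu>) = Pi\<^sub>E K B1 \<times> Pi\<^sub>E K B2"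
    using B[THEN sets.sets_into_space]
    by (auto simp: resample_def space_pair_measure space_PiM PiE_iff extensional_def B1_def B2_def
        split: if_splits; blast)
  moreover have "Pi\<^sub>E K B \<in> sets \<mu>" "Pi\<^sub>E K B1 \<in> sets \<mu>" "Pi\<^sub>E K B2 \<in> sets \<mu>"
    using B by (auto intro!: sets_PiM_I_finite finite_index simp: B1_def B2_def)
  ultimately have "emeasure (distr (\<mu> \<Otimes>\<^sub>M \<mu>) \<mu> (\<lambda>x. resample (fst x) V (snd x))) (Pi\<^sub>E K B)
      = emeasure \<mu> (Pi\<^sub>E K B1) * emeasure \<mu> (Pi\<^sub>E K B2)"
    by (simp add: emeasure_distr sigma_finite_measure.emeasure_pair_measure_Times[OF sigma_finite_measure_axioms])
  also have "\<dots> = (\<Prod>i\<in>K. emeasure (M i) (B1 i)) * (\<Prod>i\<in>K. emeasure (M i) (B2 i))"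
    using B by (simp add: emeasure_PiM finite_index B1_def B2_def)
  also have "\<dots> = (\<Prod>i\<in>K. emeasure (M i) (B1 i) * emeasure (M i) (B2 i))"
    by (simp add: prod.distrib)
  also have "\<dots> = (\<Prod>i\<in>K. emeasure (M i) (B i))"
    by (rule prod.cong) (auto simp: B1_def B2_def M.emeasure_space_1)
  finally show "emeasure (distr (\<mu> \<Otimes>\<^sub>M \<mu>) \<mu> (\<lambda>x. resample (fst x) V (snd x))) (Pi\<^sub>E K B)
      = (\<Prod>i\<in>K. emeasure (M i) (B i))" .
qed

lemma nn_integral_mult_determined_by:
  assumes [measurable]: "f \<in> borel_measurable \<mu>" "g \<in> borel_measurable \<mu>"
    and f: "determined_by V f" and g: "determined_by (- V) g"
  shows "(\<integral>\<^sup>+\<sigma>. f \<sigma> * g \<sigma> \<partial>\<mu>) = (\<integral>\<^sup>+\<sigma>. f \<sigma> \<partial>\<mu>) * (\<integral>\<^sup>+\<sigma>. g \<sigma> \<partial>\<mu>)"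
proof -
  let ?R = "\<lambda>x. resample (fst x) V (snd x)"
  have "(\<integral>\<^sup>+\<sigma>. f \<sigma> * g \<sigma> \<partial>\<mu>) = (\<integral>\<^sup>+x. f (?R x) * g (?R x) \<partial>(\<mu> \<Otimes>\<^sub>M \<mu>))"
    by (subst (1) distr_resample[symmetric, of V]) (simp add: nn_integral_distr)
  also have "\<dots> = (\<integral>\<^sup>+x. g (fst x) * f (snd x) \<partial>(\<mu> \<Otimes>\<^sub>M \<mu>))"
  proof (rule nn_integral_cong)
    fix x assume "x \<in> space (\<mu> \<Otimes>\<^sub>M \<mu>)"
    then have x: "fst x \<in> space \<mu>" "snd x \<in> space \<mu>" "?R x \<in> space \<mu>"
      by (auto simp: space_pair_measure intro: resample_in_space)
    have "f (?R x) = f (snd x)" "g (?R x) = g (fst x)"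
      by (rule determined_byD[OF f x(3,2)] determined_byD[OF g x(3,1)]; simp add: resample_def)+
    then show "f (?R x) * g (?R x) = g (fst x) * f (snd x)"
      by (simp add: mult.commute)
  qed
  also have "\<dots> = (\<integral>\<^sup>+\<sigma>. g \<sigma> * (\<integral>\<^sup>+\<tau>. f \<tau> \<partial>\<mu>) \<partial>\<mu>)"
    by (simp add: nn_integral_fst[symmetric] nn_integral_cmult)
  also have "\<dots> = (\<integral>\<^sup>+\<sigma>. f \<sigma> \<partial>\<mu>) * (\<integral>\<^sup>+\<sigma>. g \<sigma> \<partial>\<mu>)"
    by (simp add: nn_integral_multc mult.commute)
  finally show ?thesis .
qed

lemma emeasure_Int_determined_by:
  assumes [measurable]: "X \<in> sets \<mu>" "Y \<in> sets \<mu>"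
    and "determined_by V (indicator X :: _ \<Rightarrow> ennreal)" "determined_by (- V) (indicator Y :: _ \<Rightarrow> ennreal)"
  shows "emeasure \<mu> (X \<inter> Y) = emeasure \<mu> X * emeasure \<mu> Y"
proof -
  have "(\<integral>\<^sup>+\<sigma>. indicator X \<sigma> * indicator Y \<sigma> \<partial>\<mu>) = (\<integral>\<^sup>+\<sigma>. indicator X \<sigma> \<partial>\<mu>) * (\<integral>\<^sup>+\<sigma>. indicator Y \<sigma> \<partial>\<mu>)"
    by (rule nn_integral_mult_determined_by) (use assms in simp_all)
  then show ?thesis
    by (simp add: indicator_inter_arith[symmetric])
qed

lemma borel_measurable_nn_integral_resample [measurable]:
  assumes [measurable]: "h \<in> borel_measurable \<mu>"
  shows "(\<lambda>\<sigma>. \<integral>\<^sup>+\<tau>. h (resample \<sigma> V \<tau>) \<partial>\<mu>) \<in> borel_measurable \<mu>"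
proof -
  have "(\<lambda>x. h (resample (fst x) V (snd x))) \<in> borel_measurable (\<mu> \<Otimes>\<^sub>M \<mu>)"
    by measurable
  then show ?thesis
    by (rule borel_measurable_nn_integral_fst[where f = "\<lambda>x. h (resample (fst x) V (snd x))", simplified])
qed

lemma determined_by_nn_integral_resample:
  "determined_by (- V) (\<lambda>\<sigma>. \<integral>\<^sup>+\<tau>. h (resample \<sigma> V \<tau>) \<partial>\<mu>)"
  unfolding determined_by_def
proof (intro ballI impI)
  fix \<sigma> \<tau> :: "nat \<Rightarrow> 'a" assume "\<forall>k\<in>- V. \<sigma> k = \<tau> k"
  then have "resample \<sigma> V = resample \<tau> V"
    by (auto simp: resample_def fun_eq_iff)
  then show "(\<integral>\<^sup>+\<upsilon>. h (resample \<sigma> V \<upsilon>) \<partial>\<mu>) = (\<integral>\<^sup>+\<upsilon>. h (resample \<tau> V \<upsilon>) \<partial>\<mu>)"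
    by simp
qed

lemma nn_integral_resample:
  assumes [measurable]: "f \<in> borel_measurable \<mu>" "h \<in> borel_measurable \<mu>"
    and f: "determined_by (- V) f"
  shows "(\<integral>\<^sup>+\<sigma>. f \<sigma> * (\<integral>\<^sup>+\<tau>. h (resample \<sigma> V \<tau>) \<partial>\<mu>) \<partial>\<mu>) = (\<integral>\<^sup>+\<sigma>. f \<sigma> * h \<sigma> \<partial>\<mu>)"
proof -
  let ?R = "\<lambda>x. resample (fst x) V (snd x)"
  have "(\<integral>\<^sup>+\<sigma>. f \<sigma> * (\<integral>\<^sup>+\<tau>. h (resample \<sigma> V \<tau>) \<partial>\<mu>) \<partial>\<mu>)
      = (\<integral>\<^sup>+\<sigma>. \<integral>\<^sup>+\<tau>. f \<sigma> * h (resample \<sigma> V \<tau>) \<partial>\<mu> \<partial>\<mu>)"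
    by (intro nn_integral_cong nn_integral_cmult[symmetric]
        measurable_Pair2[where f = "\<lambda>x. h (?R x)", simplified]) measurable
  also have "\<dots> = (\<integral>\<^sup>+x. f (fst x) * h (?R x) \<partial>(\<mu> \<Otimes>\<^sub>M \<mu>))"
    by (rule nn_integral_fst[where f = "\<lambda>x. f (fst x) * h (?R x)", simplified]) measurable
  also have "\<dots> = (\<integral>\<^sup>+x. f (?R x) * h (?R x) \<partial>(\<mu> \<Otimes>\<^sub>M \<mu>))"
  proof (rule nn_integral_cong)
    fix x assume "x \<in> space (\<mu> \<Otimes>\<^sub>M \<mu>)"
    then have "fst x \<in> space \<mu>" "?R x \<in> space \<mu>"
      by (auto simp: space_pair_measure intro: resample_in_space)
    then have "f (?R x) = f (fst x)"
      by (intro determined_byD[OF f]) (simp_all add: resample_def)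
    then show "f (fst x) * h (?R x) = f (?R x) * h (?R x)" by simp
  qed
  also have "\<dots> = (\<integral>\<^sup>+\<sigma>. f \<sigma> * h \<sigma> \<partial>\<mu>)"
    by (subst (2) distr_resample[symmetric, of V]) (simp add: nn_integral_distr)
  finally show ?thesis .
qed

end

locale event_system = resampling_space M K
  for M :: "nat \<Rightarrow> 'a measure" and K :: "nat set" +
  fixes m :: nat and A :: "nat \<Rightarrow> (nat \<Rightarrow> 'a) set" and vbl :: "nat \<Rightarrow> nat set"
  assumes sets_A: "\<And>i. i < m \<Longrightarrow> A i \<in> sets \<mu>"
    and A_determined: "\<And>i \<sigma> \<tau>. i < m \<Longrightarrow> \<sigma> \<in> space \<mu> \<Longrightarrow> \<tau> \<in> space \<mu> \<Longrightarrow>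
        (\<forall>k\<in>vbl i. \<sigma> k = \<tau> k) \<Longrightarrow> (\<sigma> \<in> A i \<longleftrightarrow> \<tau> \<in> A i)"
    and measure_adj: "\<And>i j. i < m \<Longrightarrow> j < m \<Longrightarrow> adj vbl i j \<Longrightarrow> measure \<mu> (A i \<inter> A j) = 0"
begin

text \<open>Inside this locale \<open>indep_set\<close> alone refers to independence of set systems from
\<open>prob_space\<close>, hence the qualified \<open>Defs.indep_set\<close>.\<close>

abbreviation p :: "nat \<Rightarrow> real" where "p i \<equiv> measure \<mu> (A i)"

definition all_occur :: "nat set \<Rightarrow> (nat \<Rightarrow> 'a) set" where
  "all_occur J = {\<sigma> \<in> space \<mu>. J \<subseteq> occurring m A \<sigma>}"

definition none_outside :: "nat set \<Rightarrow> (nat \<Rightarrow> 'a) set" where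
  "none_outside T = {\<sigma> \<in> space \<mu>. occurring m A \<sigma> \<subseteq> T}"

lemma occurring_subset: "occurring m A \<sigma> \<subseteq> {..<m}"
  by (auto simp: occurring_def)

lemma sets_Collect_occurring: "{\<sigma> \<in> space \<mu>. P (occurring m A \<sigma>)} \<in> sets \<mu>"
proof -
  have "{\<sigma> \<in> space \<mu>. P (occurring m A \<sigma>)}
      = (\<Union>S\<in>{S. S \<subseteq> {..<m} \<and> P S}. {\<sigma> \<in> space \<mu>. occurring m A \<sigma> = S})"
    using occurring_subset by blast
  also have "\<dots> \<in> sets \<mu>"
  proof (intro sets.finite_UN ballI)
    fix S assume "S \<in> {S. S \<subseteq> {..<m} \<and> P S}"
    then have "{\<sigma> \<in> space \<mu>. occurring m A \<sigma> = S}
        = {\<sigma> \<in> space \<mu>. \<forall>i\<in>{..<m}. \<sigma> \<in> (if i \<in> S then A i else space \<mu> - A i)}"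
      by (auto simp: occurring_def)
    also have "\<dots> \<in> sets \<mu>"
      using sets_A by (intro sets.sets_Collect_finite_All) auto
    finally show "{\<sigma> \<in> space \<mu>. occurring m A \<sigma> = S} \<in> sets \<mu>" .
  qed auto
  finally show ?thesis .
qed

lemma sets_all_occur [measurable]: "all_occur J \<in> sets \<mu>"
  unfolding all_occur_def by (rule sets_Collect_occurring)

lemma sets_none_outside [measurable]: "none_outside T \<in> sets \<mu>"
  unfolding none_outside_def by (rule sets_Collect_occurring)

lemma borel_measurable_traj [measurable]: "(\<lambda>\<sigma>. traj \<mu> m A vbl \<sigma> Ss I) \<in> borel_measurable \<mu>"
proof (induction Ss)
  case Nil
  show ?case
    by (auto intro!: measurable_If sets_Collect_occurring)
next
  case (Cons S Ss)
  then show ?case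
    by (auto intro!: measurable_If sets_Collect_occurring borel_measurable_nn_integral_resample)
qed

lemma occurring_Int_eqI:
  assumes "\<sigma> \<in> space \<mu>" "\<tau> \<in> space \<mu>" "\<And>k. k \<in> (\<Union>i\<in>J. vbl i) \<Longrightarrow> \<sigma> k = \<tau> k"
  shows "occurring m A \<sigma> \<inter> J = occurring m A \<tau> \<inter> J"
  using A_determined[OF _ assms(1,2)] assms(3) by (auto simp: occurring_def)

lemma determined_by_all_occur:
  assumes "(\<Union>i\<in>J. vbl i) \<subseteq> V"
  shows "determined_by V (indicator (all_occur J))"
  unfolding determined_by_def
proof (intro ballI impI)
  fix \<sigma> \<tau> assume "\<sigma> \<in> space \<mu>" "\<tau> \<in> space \<mu>" "\<forall>k\<in>V. \<sigma> k = \<tau> k"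
  with assms have "occurring m A \<sigma> \<inter> J = occurring m A \<tau> \<inter> J"
    by (intro occurring_Int_eqI) auto
  then have "J \<subseteq> occurring m A \<sigma> \<longleftrightarrow> J \<subseteq> occurring m A \<tau>"
    by (metis Int_subset_iff subset_refl)
  with \<open>\<sigma> \<in> space \<mu>\<close> \<open>\<tau> \<in> space \<mu>\<close> show "indicator (all_occur J) \<sigma> = indicator (all_occur J) \<tau>"
    by (simp add: all_occur_def indicator_def)
qed

lemma determined_by_none_outside:
  assumes "(\<Union>j\<in>{..<m} - T. vbl j) \<subseteq> V"
  shows "determined_by V (indicator (none_outside T))"
  unfolding determined_by_def
proof (intro ballI impI)
  fix \<sigma> \<tau> assume "\<sigma> \<in> space \<mu>" "\<tau> \<in> space \<mu>" "\<forall>k\<in>V. \<sigma> k = \<tau> k"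
  with assms have "occurring m A \<sigma> \<inter> ({..<m} - T) = occurring m A \<tau> \<inter> ({..<m} - T)"
    by (intro occurring_Int_eqI) auto
  then have "occurring m A \<sigma> \<subseteq> T \<longleftrightarrow> occurring m A \<tau> \<subseteq> T"
    using occurring_subset by blast
  with \<open>\<sigma> \<in> space \<mu>\<close> \<open>\<tau> \<in> space \<mu>\<close> show "indicator (none_outside T) \<sigma> = indicator (none_outside T) \<tau>"
    by (simp add: none_outside_def indicator_def)
qed

lemma AE_indep_set_occurring: "AE \<sigma> in \<mu>. Defs.indep_set m vbl (occurring m A \<sigma>)"
proof -
  have "AE \<sigma> in \<mu>. adj vbl i j \<longrightarrow> \<sigma> \<notin> A i \<inter> A j" if "i < m" "j < m" for i j
  proof (cases "adj vbl i j")
    case True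
    then have "A i \<inter> A j \<in> null_sets \<mu>"
      using that measure_adj sets_A by (simp add: null_sets_def P.emeasure_eq_measure)
    then show ?thesis
      using AE_not_in by force
  qed simp
  then have "AE \<sigma> in \<mu>. \<forall>i\<in>{..<m}. \<forall>j\<in>{..<m}. adj vbl i j \<longrightarrow> \<sigma> \<notin> A i \<inter> A j"
    by (auto intro!: AE_finite_allI)
  then show ?thesis
    by eventually_elim (auto simp: Defs.indep_set_def occurring_def)
qed

lemma all_occur_singleton: "i < m \<Longrightarrow> all_occur {i} = A i"
  using sets.sets_into_space[OF sets_A] by (auto simp: all_occur_def occurring_def)

lemma emeasure_all_occur:
  assumes "Defs.indep_set m vbl J"
  shows "emeasure \<mu> (all_occur J) = (\<Prod>i\<in>J. emeasure \<mu> (A i))"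
proof -
  have "finite J"
    using assms by (auto simp: Defs.indep_set_def intro: finite_subset)
  then show ?thesis
    using assms
  proof (induction J rule: finite_induct)
    case empty
    have "all_occur {} = space \<mu>" by (simp add: all_occur_def)
    then show ?case by (simp add: P.emeasure_space_1)
  next
    case (insert i J)
    then have i: "i < m" and J: "Defs.indep_set m vbl J"
      by (auto simp: Defs.indep_set_def)
    have "(\<Union>j\<in>J. vbl j) \<subseteq> - vbl i"
      using insert.prems insert.hyps(2) by (fastforce simp: Defs.indep_set_def adj_def)
    then have "emeasure \<mu> (all_occur {i} \<inter> all_occur J) = emeasure \<mu> (all_occur {i}) * emeasure \<mu> (all_occur J)"
      by (intro emeasure_Int_determined_by determined_by_all_occur) auto
    moreover have "all_occur (insert i J) = all_occur {i} \<inter> all_occur J"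
      by (auto simp: all_occur_def)
    ultimately show ?case
      using insert.IH[OF J] insert.hyps by (simp add: all_occur_singleton[OF i])
  qed
qed

lemma measure_all_occur:
  "measure \<mu> (all_occur J) = (if Defs.indep_set m vbl J then \<Prod>i\<in>J. p i else 0)"
proof (cases "Defs.indep_set m vbl J")
  case True
  then have "ennreal (measure \<mu> (all_occur J)) = ennreal (\<Prod>i\<in>J. p i)"
    using emeasure_all_occur by (simp add: P.emeasure_eq_measure prod_ennreal)
  with True show ?thesis
    by (simp add: prod_nonneg)
next
  case False
  let ?N = "{\<sigma> \<in> space \<mu>. \<not> Defs.indep_set m vbl (occurring m A \<sigma>)}"
  have N: "?N \<in> sets \<mu>"
    by (rule sets_Collect_occurring)
  have "all_occur J \<subseteq> ?N"
    unfolding all_occur_def using False indep_set_subset by blast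
  moreover have "measure \<mu> ?N = 0"
    using AE_indep_set_occurring N by (subst P.prob_eq_0) auto
  ultimately have "measure \<mu> (all_occur J) \<le> 0"
    using P.finite_measure_mono[OF _ N] by simp
  with False show ?thesis
    using measure_nonneg[of \<mu> "all_occur J"] by simp
qed

lemma prob_occurring_eq_q_coef:
  assumes I: "Defs.indep_set m vbl I"
  shows "measure \<mu> {\<sigma> \<in> space \<mu>. occurring m A \<sigma> = I} = q_coef m vbl p I"
proof -
  have Im: "I \<subseteq> {..<m}" and "finite I"
    using I by (auto simp: Defs.indep_set_def intro: finite_subset)
  define R where "R = {..<m} - I"
  have "{\<sigma> \<in> space \<mu>. occurring m A \<sigma> = I} = all_occur I - (\<Union>j\<in>R. A j)"
    using Im by (auto simp: occurring_def all_occur_def R_def)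
  then have "measure \<mu> {\<sigma> \<in> space \<mu>. occurring m A \<sigma> = I}
      = (\<Sum>J\<in>Pow R. (-1) ^ card J * measure \<mu> (all_occur I \<inter> (\<Inter>j\<in>J. A j)))"
    by (simp only:) (rule P.measure_Diff_UN_inclusion_exclusion; simp add: R_def sets_A)
  also have "\<dots> = (\<Sum>J\<in>Pow R. (-1) ^ (card (I \<union> J) - card I) * measure \<mu> (all_occur (I \<union> J)))"
  proof (rule sum.cong)
    fix J assume "J \<in> Pow R"
    then have "finite J" "I \<inter> J = {}" "J \<subseteq> {..<m}"
      by (auto simp: R_def intro: finite_subset)
    moreover have "all_occur I \<inter> (\<Inter>j\<in>J. A j) = all_occur (I \<union> J)"
      using \<open>J \<subseteq> {..<m}\<close> by (auto simp: all_occur_def occurring_def)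
    ultimately show "(-1) ^ card J * measure \<mu> (all_occur I \<inter> (\<Inter>j\<in>J. A j))
        = (-1) ^ (card (I \<union> J) - card I) * measure \<mu> (all_occur (I \<union> J))"
      using \<open>finite I\<close> by (simp add: card_Un_disjoint)
  qed simp
  also have "\<dots> = (\<Sum>J | I \<subseteq> J \<and> J \<subseteq> {..<m}. (-1) ^ (card J - card I) * measure \<mu> (all_occur J))"
    by (rule sum.reindex_bij_betw[where h = "(\<union>) I"], rule bij_betw_byWitness[where f' = "\<lambda>J. J - I"])
      (use Im in \<open>auto simp: R_def\<close>)
  also have "\<dots> = q_coef m vbl p I"
    unfolding q_coef_def measure_all_occur
    by (rule sum.mono_neutral_cong_right) (auto simp: Defs.indep_set_def)
  finally show ?thesis .
qed

lemma nn_integral_traj_Cons: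
  assumes S: "Defs.indep_set m vbl S" and "S \<subseteq> T"
  shows "(\<integral>\<^sup>+\<sigma>. indicator (none_outside T) \<sigma> * traj \<mu> m A vbl \<sigma> (S # Ss) I \<partial>\<mu>)
    = emeasure \<mu> (all_occur S) *
      (\<integral>\<^sup>+\<sigma>. indicator (none_outside (Gamma_plus m vbl S)) \<sigma> * traj \<mu> m A vbl \<sigma> Ss I \<partial>\<mu>)"
proof -
  define V where "V = (\<Union>i\<in>S. vbl i)"
  define G where "G \<sigma> = (\<integral>\<^sup>+\<tau>. traj \<mu> m A vbl (resample \<sigma> V \<tau>) Ss I \<partial>\<mu>)" for \<sigma>
  let ?N = "indicator (none_outside (Gamma_plus m vbl S)) :: _ \<Rightarrow> ennreal"
  have [measurable]: "G \<in> borel_measurable \<mu>"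
    unfolding G_def by measurable
  have N: "determined_by (- V) ?N"
    unfolding V_def by (rule determined_by_none_outside[OF vbl_outside_Gamma_plus])
  have G: "determined_by (- V) G"
    unfolding G_def by (rule determined_by_nn_integral_resample)
  have "(\<integral>\<^sup>+\<sigma>. indicator (none_outside T) \<sigma> * traj \<mu> m A vbl \<sigma> (S # Ss) I \<partial>\<mu>)
      = (\<integral>\<^sup>+\<sigma>. indicator (all_occur S) \<sigma> * (?N \<sigma> * G \<sigma>) \<partial>\<mu>)"
  proof (rule nn_integral_cong_AE)
    \<comment> \<open>a.s. the occurring set J is independent, and then \<open>S \<subseteq> J \<subseteq> \<Gamma>\<^sup>+(S)\<close> forces \<open>J = S\<close>\<close>
    show "AE \<sigma> in \<mu>. indicator (none_outside T) \<sigma> * traj \<mu> m A vbl \<sigma> (S # Ss) I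
        = indicator (all_occur S) \<sigma> * (?N \<sigma> * G \<sigma>)"
      using AE_indep_set_occurring AE_space
    proof eventually_elim
      case (elim \<sigma>)
      have "occurring m A \<sigma> \<subseteq> T \<and> occurring m A \<sigma> = S
          \<longleftrightarrow> S \<subseteq> occurring m A \<sigma> \<and> occurring m A \<sigma> \<subseteq> Gamma_plus m vbl S"
        using indep_set_eq_if_subset_Gamma_plus[OF elim(1)] \<open>S \<subseteq> T\<close> by (auto simp: Gamma_plus_def)
      then show ?case
        using elim(2) by (auto simp: indicator_def all_occur_def none_outside_def G_def V_def)
    qed
  qed
  also have "\<dots> = emeasure \<mu> (all_occur S) * (\<integral>\<^sup>+\<sigma>. ?N \<sigma> * G \<sigma> \<partial>\<mu>)"
    using nn_integral_mult_determined_by[OF _ _ determined_by_all_occur determined_by_mult[OF N]]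
      G by (simp add: V_def)
  also have "(\<integral>\<^sup>+\<sigma>. ?N \<sigma> * G \<sigma> \<partial>\<mu>) = (\<integral>\<^sup>+\<sigma>. ?N \<sigma> * traj \<mu> m A vbl \<sigma> Ss I \<partial>\<mu>)"
    unfolding G_def by (rule nn_integral_resample[OF _ _ N]) measurable
  finally show ?thesis .
qed

lemma nn_integral_traj:
  assumes "indep_set_seq m vbl Ss" "hd (Ss @ [I]) \<subseteq> T" "Ss \<noteq> [] \<longrightarrow> I \<subseteq> Gamma_plus m vbl (last Ss)"
  shows "(\<integral>\<^sup>+\<sigma>. indicator (none_outside T) \<sigma> * traj \<mu> m A vbl \<sigma> Ss I \<partial>\<mu>)
    = ennreal (p_seq p Ss) * emeasure \<mu> {\<sigma> \<in> space \<mu>. occurring m A \<sigma> = I}"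
  using assms
proof (induction Ss arbitrary: T)
  case Nil
  then have "indicator (none_outside T) \<sigma> * traj \<mu> m A vbl \<sigma> [] I
      = indicator {\<sigma> \<in> space \<mu>. occurring m A \<sigma> = I} \<sigma>" for \<sigma>
    by (auto simp: indicator_def none_outside_def)
  then show ?case
    by (simp add: p_seq_def sets_Collect_occurring[of "\<lambda>J. J = I"])
next
  case (Cons S Ss)
  then have S: "Defs.indep_set m vbl S" "S \<subseteq> T"
    and Ss: "indep_set_seq m vbl Ss" "hd (Ss @ [I]) \<subseteq> Gamma_plus m vbl S"
      "Ss \<noteq> [] \<longrightarrow> I \<subseteq> Gamma_plus m vbl (last Ss)"
    using indep_set_seq_ConsD[of m vbl S Ss] by (cases Ss; auto)+
  have "emeasure \<mu> (all_occur S) = ennreal (\<Prod>i\<in>S. p i)"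
    using measure_all_occur[of S] S(1) by (simp add: P.emeasure_eq_measure)
  with nn_integral_traj_Cons[OF S] Cons.IH[OF Ss] show ?case
    by (simp add: p_seq_def ennreal_mult' mult.assoc prod_nonneg)
qed

lemma none_outside_all: "none_outside {..<m} = space \<mu>"
  using occurring_subset by (auto simp: none_outside_def)

lemma run_prob_eq:
  assumes I: "Defs.indep_set m vbl I" and Ss: "indep_set_seq m vbl Ss" "Ss \<noteq> []"
    and I_Gamma: "I \<subseteq> Gamma_plus m vbl (last Ss)"
  shows "run_prob \<mu> m A vbl Ss I = q_coef m vbl p I * p_seq p Ss"
proof -
  obtain S Ss' where "Ss = S # Ss'"
    using Ss(2) by (cases Ss) auto
  then have hd: "hd (Ss @ [I]) \<subseteq> {..<m}"
    using indep_set_seq_ConsD[of m vbl S Ss'] Ss(1) by (simp add: Defs.indep_set_def)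
  have q: "q_coef m vbl p I \<ge> 0"
    using prob_occurring_eq_q_coef[OF I] measure_nonneg by metis
  have "(\<integral>\<^sup>+\<sigma>. traj \<mu> m A vbl \<sigma> Ss I \<partial>\<mu>)
      = (\<integral>\<^sup>+\<sigma>. indicator (none_outside {..<m}) \<sigma> * traj \<mu> m A vbl \<sigma> Ss I \<partial>\<mu>)"
    by (rule nn_integral_cong) (simp add: none_outside_all)
  also have "\<dots> = ennreal (p_seq p Ss) * emeasure \<mu> {\<sigma> \<in> space \<mu>. occurring m A \<sigma> = I}"
    using Ss(2) I_Gamma by (intro nn_integral_traj[OF Ss(1) hd]) simp
  also have "\<dots> = ennreal (p_seq p Ss * q_coef m vbl p I)"
    using q p_seq_nonneg[of p Ss]
    by (simp add: P.emeasure_eq_measure prob_occurring_eq_q_coef[OF I] ennreal_mult)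
  finally show ?thesis
    using q p_seq_nonneg[of p Ss] by (simp add: run_prob_def mult.commute)
qed

end

theorem lemma9:
  fixes n m :: nat
    and M :: "nat \<Rightarrow> 'a measure"
    and A :: "nat \<Rightarrow> (nat \<Rightarrow> 'a) set"
    and vbl :: "nat \<Rightarrow> nat set"
    and I :: "nat set"
    and Ss :: "nat set list"
  assumes M_prob: "\<And>k. k < n \<Longrightarrow> prob_space (M k)"
    and A_meas: "\<And>i. i < m \<Longrightarrow> A i \<in> sets (PiM {..<n} M)"
    and vbl_sub: "\<And>i. i < m \<Longrightarrow> vbl i \<subseteq> {..<n}"
    and A_det: "\<And>i \<sigma> \<tau>. i < m \<Longrightarrow> \<sigma> \<in> space (PiM {..<n} M) \<Longrightarrow> \<tau> \<in> space (PiM {..<n} M) \<Longrightarrow>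
                   (\<forall>k\<in>vbl i. \<sigma> k = \<tau> k) \<Longrightarrow> (\<sigma> \<in> A i \<longleftrightarrow> \<tau> \<in> A i)"
    and disj: "\<And>i j. i < m \<Longrightarrow> j < m \<Longrightarrow> adj vbl i j \<Longrightarrow> measure (PiM {..<n} M) (A i \<inter> A j) = 0"
    and I_indep: "indep_set m vbl I"
    and Ss_seq: "indep_set_seq m vbl Ss"
    and Ss_ne: "Ss \<noteq> []"
    and I_sub: "I \<subseteq> Gamma_plus m vbl (last Ss)"
  shows "run_prob (PiM {..<n} M) m A vbl Ss I
           = q_coef m vbl (\<lambda>i. measure (PiM {..<n} M) (A i)) I
             * p_seq (\<lambda>i. measure (PiM {..<n} M) (A i)) Ss"
proof -
  define M' where "M' = (\<lambda>k. if k \<in> {..<n} then M k else return (count_space UNIV) undefined)"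
  have \<mu>: "PiM {..<n} M = PiM {..<n} M'"
    by (rule PiM_cong) (simp_all add: M'_def)
  have "finite_product_prob_space M' {..<n}"
    unfolding M'_def by (rule finite_product_prob_space_extend) (simp_all add: M_prob)
  then interpret resampling_space M' "{..<n}"
    by (simp add: resampling_space_def)
  interpret event_system M' "{..<n}" m A vbl
    by unfold_locales (fact A_meas[unfolded \<mu>] A_det[unfolded \<mu>] disj[unfolded \<mu>])+
  show ?thesis
    using run_prob_eq[OF I_indep Ss_seq Ss_ne I_sub] by (simp add: \<mu>)
qed

end
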